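(* Let $n$ be an odd prime and let $x,y,z$ be positive integers with $\gcd(x,y,z)=1$ satisfying $x^n + y^n = z^n$. Then: (i) every odd prime $p \mid x$ satisfies $\nu_p(z^{p-1} - y^{p-1}) \geq n - 1$; every odd prime $p \mid y$ satisfies $\nu_p(z^{p-1} - x^{p-1}) \geq n - 1$; every odd prime $p \mid z$ satisfies $\nu_p(x^{p-1} - y^{p-1}) \geq n - 1$; (ii) if moreover $n \nmid xyz$, then the lower bounds $n-1$ in (i) can be replaced by $n$; (iii) if $2 \mid z$ then $\nu_2(x + y) \geq n$; if $2 \mid x$ then $\nu_2(z - y) \geq n$; if $2 \mid y$ then $\nu_2(z - x) \geq n$; (iv) if a prime $p$ divides both $x$ and $z - y$, then $\nu_p(z - y) \geq n - 1$; if a prime $p$ divides both $y$ and $z - x$, then $\nu_p(z - x) \geq n - 1$; if a prime $p$ divides both $z$ and $x + y$, then $\nu_p(x + y) \geq n - 1$.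
   Context: For a prime $p$ and a nonzero integer $m$, $\nu_p(m)$ denotes the exponent of the exact power of $p$ dividing $m$ (the $p$-adic valuation). (The paper phrases (i) as: $p$ is a "Wieferich prime to the base $(a,b)$ of order $r$" when $p\nmid ab$ and $\nu_p(a^{p-1}-b^{p-1}) = r > 1$.) *)

theory Defs
  imports "HOL-Computational_Algebra.Primes"
begin

end

theory Submission
  imports Defs "HOL-Number_Theory.Number_Theory"
begin

(* Write the equation as u^n - v^n = w^n for (u, v, w) = (z, y, x), (z, x, y) and (x, -y, z);
   by the coprimality of x, y, z a prime p dividing w divides neither u nor v.
   If p divides u - v, lifting the exponent gives
   nu_p(u^n - v^n) = nu_p(u - v) + [p = n], and p^n divides w^n = u^n - v^n,
   so nu_p(u - v) >= n - [p = n]. This is (iv), and (iii) for p = 2, since then u and v are odd.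
   For odd p, Fermat's little theorem gives p | u^(p-1) - v^(p-1), and w^n still divides
   (u^(p-1))^n - (v^(p-1))^n, a multiple of u^n - v^n; the same argument applied to
   u^(p-1), v^(p-1) gives (i) and (ii). *)

lemma fermat_theorem_int:
  fixes a :: int and p :: nat
  assumes "prime p" and "\<not> int p dvd a"
  shows "[a ^ (p - 1) = 1] (mod int p)"
proof -
  interpret residues_prime p "residue_ring (int p)"
    using assms(1) by unfold_locales
  have "coprime a (int p)"
    using assms prime_imp_coprime[of "int p" a] by (simp add: coprime_commute)
  then show ?thesis
    using euler_theorem prime_totient_eq by simp
qed

lemma power_add_diff_power_expansion:
  fixes b t :: "'a :: comm_ring_1"
  shows "\<exists>r. (b + t) ^ (n + 2) - b ^ (n + 2) =
    t * (of_nat (n + 2) * b ^ (n + 1) + t * (of_nat (n + 2 choose 2) * b ^ n + t * r))"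
proof (induction n)
  case 0
  show ?case
    by (rule exI[of _ 0]) (simp add: power2_eq_square algebra_simps numeral_2_eq_2)
next
  case (Suc n)
  then obtain r where r: "(b + t) ^ (n + 2) - b ^ (n + 2) =
    t * (of_nat (n + 2) * b ^ (n + 1) + t * (of_nat (n + 2 choose 2) * b ^ n + t * r))" ..
  have "(b + t) ^ (Suc n + 2) - b ^ (Suc n + 2) =
      (b + t) * ((b + t) ^ (n + 2) - b ^ (n + 2)) + t * b ^ (n + 2)"
    by (simp add: algebra_simps)
  also have "\<dots> = t * (of_nat (Suc n + 2) * b ^ (Suc n + 1) +
      t * (of_nat (Suc n + 2 choose 2) * b ^ Suc n +
        t * (of_nat (n + 2 choose 2) * b ^ n + (b + t) * r)))"
    unfolding r by (simp add: algebra_simps numeral_2_eq_2)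
  finally show ?case ..
qed

lemma multiplicity_pow_diff_cofactor:
  fixes b t r :: int and p n j k :: nat
  assumes p: "prime p" "int p dvd t" "\<not> int p dvd b" and n: "prime n" "odd n"
  defines "q \<equiv> of_nat n * b ^ k + t * (of_nat (n choose 2) * b ^ j + t * r)"
  shows "q \<noteq> 0" and "multiplicity (int p) q = of_bool (p = n)"
proof -
  have pp: "prime (int p)" using p(1) by simp
  have pb: "\<not> int p dvd b ^ k" using p(3) pp prime_dvd_power by blast
  have "q \<noteq> 0 \<and> multiplicity (int p) q = of_bool (p = n)"
  proof (cases "p = n")
    case False
    then have "\<not> int p dvd of_nat n" using p(1) n(1) by (auto dest: primes_dvd_imp_eq)
    then have "\<not> int p dvd of_nat n * b ^ k" using pb pp by (simp add: prime_dvd_mult_iff)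
    then have "\<not> int p dvd q" using p(2) unfolding q_def by (simp add: dvd_add_left_iff)
    then show ?thesis using False by (auto simp: not_dvd_imp_multiplicity_0)
  next
    case True
    have "n choose 2 = n * ((n - 1) div 2)"
      using n(2) by (simp add: choose_two div_mult_swap)
    then have "int p dvd of_nat (n choose 2) * b ^ j + t * r" using True p(2) by simp
    then have tail: "int p ^ 2 dvd t * (of_nat (n choose 2) * b ^ j + t * r)"
      using p(2) by (simp add: power2_eq_square mult_dvd_mono)
    have "\<not> int p ^ 2 dvd q"
    proof
      assume "int p ^ 2 dvd q"
      then have "int p * int p dvd int p * b ^ k"
        using tail True unfolding q_def by (simp add: dvd_add_left_iff power2_eq_square)
      then show False using pb p(1) by (simp add: prime_gt_0_nat)
    qed
    moreover have "int p ^ 1 dvd q" using True tail unfolding q_def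
      by (simp add: power2_eq_square) (metis dvd_add dvd_mult_left dvd_triv_left)
    ultimately show ?thesis using True by (auto intro: multiplicity_eqI simp: numeral_2_eq_2)
  qed
  then show "q \<noteq> 0" and "multiplicity (int p) q = of_bool (p = n)" by auto
qed

lemma multiplicity_pow_diff_pow_odd_prime:
  fixes a b :: int and p n :: nat
  assumes p: "prime p" "int p dvd a - b" "\<not> int p dvd b" and "a \<noteq> b"
    and n: "prime n" "odd n"
  shows "multiplicity (int p) (a ^ n - b ^ n) = multiplicity (int p) (a - b) + of_bool (p = n)"
proof -
  define t where "t = a - b"
  obtain r where r: "a ^ n - b ^ n =
      t * (of_nat n * b ^ (n - 1) + t * (of_nat (n choose 2) * b ^ (n - 2) + t * r))"
  proof -
    have "n \<ge> 2" using n(1) prime_ge_2_nat by blast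
    then have e: "n - 2 + 2 = n" "n - 2 + 1 = n - 1" "b + t = a" by (simp_all add: t_def)
    show thesis using power_add_diff_power_expansion[of b t "n - 2", unfolded e] that by blast
  qed
  have "int p dvd t" "t \<noteq> 0" using p(2) \<open>a \<noteq> b\<close> by (simp_all add: t_def)
  note cofactor = multiplicity_pow_diff_cofactor[OF p(1) \<open>int p dvd t\<close> p(3) n, of "n - 1" "n - 2" r]
  have "prime_elem (int p)" using p(1) by simp
  then show ?thesis
    unfolding r t_def[symmetric]
    using cofactor \<open>t \<noteq> 0\<close> by (simp add: prime_elem_multiplicity_mult_distrib)
qed

lemma pow_dvd_pow_diff_imp_multiplicity_ge:
  fixes u v w :: int and p n :: nat
  assumes p: "prime p" "int p dvd w" "int p dvd u - v" "\<not> int p dvd v"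
    and w: "w ^ n dvd u ^ n - v ^ n" "u ^ n \<noteq> v ^ n"
    and n: "prime n" "odd n"
  shows "n \<le> multiplicity (int p) (u - v) + of_bool (p = n)"
proof -
  have "int p ^ n dvd u ^ n - v ^ n"
    using dvd_power_same[OF p(2)] w(1) by (rule dvd_trans)
  moreover have "\<not> is_unit (int p)" using prime_gt_1_nat[OF p(1)] by simp
  ultimately have "n \<le> multiplicity (int p) (u ^ n - v ^ n)"
    using w(2) by (intro multiplicity_geI) auto
  also have "\<dots> = multiplicity (int p) (u - v) + of_bool (p = n)"
    using w(2) by (intro multiplicity_pow_diff_pow_odd_prime p(1,3,4) n) auto
  finally show ?thesis .
qed

lemma coprime_of_pow_add_pow_eq:
  fixes x y z :: int
  assumes eq: "x ^ n + y ^ n = z ^ n" and "n > 0" and gcd: "gcd x (gcd y z) = 1"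
  shows "coprime x y" "coprime y z"
proof -
  have unit: "is_unit c" if "c dvd x" "c dvd y" "c dvd z" for c
    using that gcd by (metis gcd_greatest is_unit_gcd_iff)
  show "coprime x y"
  proof (rule coprimeI)
    fix c assume c: "c dvd x" "c dvd y"
    then have "c ^ n dvd z ^ n" unfolding eq[symmetric] by (simp add: dvd_power_same)
    with c show "is_unit c" using \<open>n > 0\<close> unit by simp
  qed
  show "coprime y z"
  proof (rule coprimeI)
    fix c assume c: "c dvd y" "c dvd z"
    then have "c ^ n dvd z ^ n - y ^ n" by (simp add: dvd_power_same)
    then have "c ^ n dvd x ^ n" by (simp flip: eq)
    with c show "is_unit c" using \<open>n > 0\<close> unit by simp
  qed
qed

locale fermat_difference =
  fixes n :: nat and u v w :: int
  assumes n: "prime n" "odd n"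
    and difference: "u ^ n - v ^ n = w ^ n"
    and nonzero: "w \<noteq> 0"
    and coprime: "coprime v w"
begin

lemma coprime_u_w: "coprime u w"
proof (rule coprimeI)
  fix c assume "c dvd u" "c dvd w"
  then have "c ^ n dvd u ^ n - w ^ n" by (simp add: dvd_power_same)
  then have "c dvd v"
    using difference n(1) prime_gt_0_nat by (simp add: algebra_simps)
  then show "is_unit c" by (rule coprime_common_divisor[OF coprime _ \<open>c dvd w\<close>])
qed

lemma prime_dvd_w_not_dvd:
  assumes "prime p" "int p dvd w"
  shows "\<not> int p dvd u" "\<not> int p dvd v"
proof -
  have "\<not> is_unit (int p)" using prime_gt_1_nat[OF assms(1)] by simp
  then show "\<not> int p dvd u" "\<not> int p dvd v"
    using assms(2) coprime coprime_u_w by (auto dest: coprime_common_divisor)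
qed

lemma powers_ne: "u ^ n \<noteq> v ^ n"
  using difference nonzero by auto

lemma multiplicity_diff_ge:
  assumes "prime p" "int p dvd w" "int p dvd u - v"
  shows "n \<le> multiplicity (int p) (u - v) + of_bool (p = n)"
proof (rule pow_dvd_pow_diff_imp_multiplicity_ge[OF assms _ _ powers_ne n])
  show "\<not> int p dvd v" using prime_dvd_w_not_dvd assms by blast
  show "w ^ n dvd u ^ n - v ^ n" by (simp add: difference)
qed

lemma multiplicity_2_diff_ge:
  assumes "even w"
  shows "n \<le> multiplicity 2 (u - v)"
proof -
  have "odd v" using coprime assms by auto
  moreover have "odd u" using coprime_u_w assms by auto
  ultimately have "n \<le> multiplicity (int 2) (u - v) + of_bool (2 = n)"
    using assms by (intro multiplicity_diff_ge) auto
  then show ?thesis using n(2) by (cases "n = 2") auto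
qed

lemma multiplicity_pow_pred_diff_ge:
  assumes p: "prime p" "odd p" "int p dvd w" and ne: "u ^ (p - 1) \<noteq> v ^ (p - 1)"
  shows "n \<le> multiplicity (int p) (u ^ (p - 1) - v ^ (p - 1)) + of_bool (p = n)"
proof (rule pow_dvd_pow_diff_imp_multiplicity_ge[OF p(1,3) _ _ _ _ n])
  note not_dvd = prime_dvd_w_not_dvd[OF p(1,3)]
  then show "int p dvd u ^ (p - 1) - v ^ (p - 1)"
    using fermat_theorem_int[OF p(1)] by (metis cong_iff_dvd_diff cong_sym cong_trans)
  show "\<not> int p dvd v ^ (p - 1)"
    using not_dvd p(1) prime_dvd_power[of "int p"] by auto
  have "u ^ n - v ^ n dvd (u ^ n) ^ (p - 1) - (v ^ n) ^ (p - 1)"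
    by (simp add: power_diff_sumr2)
  then show "w ^ n dvd (u ^ (p - 1)) ^ n - (v ^ (p - 1)) ^ n"
    by (simp add: difference flip: power_mult) (simp add: mult.commute)
  show "(u ^ (p - 1)) ^ n \<noteq> (v ^ (p - 1)) ^ n"
    using ne p(2) n(1) prime_gt_0_nat by (simp add: power_eq_iff_eq_base zero_le_even_power)
qed

end

locale fermat_triple =
  fixes n :: nat and x y z :: int
  assumes n: "prime n" "odd n"
    and pos: "x > 0" "y > 0" "z > 0"
    and gcd: "gcd x (gcd y z) = 1"
    and fermat: "x ^ n + y ^ n = z ^ n"
begin

lemma coprime_x_y: "coprime x y" and coprime_y_z: "coprime y z"
  using coprime_of_pow_add_pow_eq[OF fermat _ gcd] n(1) prime_gt_0_nat by auto

sublocale zyx: fermat_difference n z y x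
  using n pos fermat coprime_x_y by unfold_locales (auto simp: coprime_commute)

sublocale zxy: fermat_difference n z x y
  using n pos fermat coprime_x_y by unfold_locales auto

sublocale xyz: fermat_difference n x "- y" z
  using n pos fermat coprime_y_z by unfold_locales (auto simp: power_minus_odd)

lemma less_z: "x < z" "y < z"
proof -
  have "x ^ n < z ^ n" "y ^ n < z ^ n"
    using pos fermat zero_less_power[of x n] zero_less_power[of y n] by linarith+
  then show "x < z" "y < z"
    using pos(3) power_less_imp_less_base by fastforce+
qed

lemma pow_pred_ne_z:
  assumes "prime p"
  shows "z ^ (p - 1) \<noteq> x ^ (p - 1)" "z ^ (p - 1) \<noteq> y ^ (p - 1)"
  using less_z pos prime_gt_1_nat[OF assms]
  by (simp_all add: power_strict_mono less_imp_neq[symmetric])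

lemma prime_dvd_x_multiplicity_ge:
  assumes "prime p" "odd p" "int p dvd x"
  shows "n - 1 \<le> multiplicity (int p) (z ^ (p - 1) - y ^ (p - 1))"
    and "\<not> int n dvd x * y * z \<Longrightarrow> n \<le> multiplicity (int p) (z ^ (p - 1) - y ^ (p - 1))"
  using zyx.multiplicity_pow_pred_diff_ge[OF assms pow_pred_ne_z(2)[OF assms(1)]] assms(3)
  by (cases "p = n"; simp)+

lemma prime_dvd_y_multiplicity_ge:
  assumes "prime p" "odd p" "int p dvd y"
  shows "n - 1 \<le> multiplicity (int p) (z ^ (p - 1) - x ^ (p - 1))"
    and "\<not> int n dvd x * y * z \<Longrightarrow> n \<le> multiplicity (int p) (z ^ (p - 1) - x ^ (p - 1))"
  using zxy.multiplicity_pow_pred_diff_ge[OF assms pow_pred_ne_z(1)[OF assms(1)]] assms(3)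
  by (cases "p = n"; simp)+

lemma prime_dvd_z_multiplicity_ge:
  assumes "prime p" "odd p" "int p dvd z"
  shows "x ^ (p - 1) - y ^ (p - 1) = 0 \<or> n - 1 \<le> multiplicity (int p) (x ^ (p - 1) - y ^ (p - 1))"
    and "\<not> int n dvd x * y * z \<Longrightarrow>
      x ^ (p - 1) - y ^ (p - 1) = 0 \<or> n \<le> multiplicity (int p) (x ^ (p - 1) - y ^ (p - 1))"
proof -
  have "n \<le> multiplicity (int p) (x ^ (p - 1) - y ^ (p - 1)) + of_bool (p = n)"
    if "x ^ (p - 1) \<noteq> y ^ (p - 1)"
  proof -
    have "(- y) ^ (p - 1) = y ^ (p - 1)" using \<open>odd p\<close> by simp
    with that show ?thesis using xyz.multiplicity_pow_pred_diff_ge[OF assms] by simp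
  qed
  then show "x ^ (p - 1) - y ^ (p - 1) = 0 \<or> n - 1 \<le> multiplicity (int p) (x ^ (p - 1) - y ^ (p - 1))"
    and "\<not> int n dvd x * y * z \<Longrightarrow>
      x ^ (p - 1) - y ^ (p - 1) = 0 \<or> n \<le> multiplicity (int p) (x ^ (p - 1) - y ^ (p - 1))"
    using assms(3) by (cases "p = n"; cases "x ^ (p - 1) = y ^ (p - 1)"; simp)+
qed

lemma multiplicity_2_ge:
  shows "even x \<Longrightarrow> n \<le> multiplicity 2 (z - y)"
    and "even y \<Longrightarrow> n \<le> multiplicity 2 (z - x)"
    and "even z \<Longrightarrow> n \<le> multiplicity 2 (x + y)"
  using zyx.multiplicity_2_diff_ge zxy.multiplicity_2_diff_ge xyz.multiplicity_2_diff_ge by simp_all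

lemma common_prime_multiplicity_ge:
  assumes "prime p"
  shows "int p dvd x \<Longrightarrow> int p dvd z - y \<Longrightarrow> n - 1 \<le> multiplicity (int p) (z - y)"
    and "int p dvd y \<Longrightarrow> int p dvd z - x \<Longrightarrow> n - 1 \<le> multiplicity (int p) (z - x)"
    and "int p dvd z \<Longrightarrow> int p dvd x + y \<Longrightarrow> n - 1 \<le> multiplicity (int p) (x + y)"
proof -
  have drop: "n - 1 \<le> m" if "n \<le> m + of_bool (p = n)" for m
    using that by (cases "p = n") auto
  show "n - 1 \<le> multiplicity (int p) (z - y)" if "int p dvd x" "int p dvd z - y"
    using zyx.multiplicity_diff_ge[OF assms that] by (rule drop)
  show "n - 1 \<le> multiplicity (int p) (z - x)" if "int p dvd y" "int p dvd z - x"
    using zxy.multiplicity_diff_ge[OF assms that] by (rule drop)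
  show "n - 1 \<le> multiplicity (int p) (x + y)" if "int p dvd z" "int p dvd x + y"
    using xyz.multiplicity_diff_ge[OF assms that(1)] that(2) drop by simp
qed

end

theorem theorem1p4:
  fixes n :: nat and x y z :: int
  assumes "prime n" and "odd n"
    and "x > 0" and "y > 0" and "z > 0"
    and "gcd x (gcd y z) = 1"
    and "x ^ n + y ^ n = z ^ n"
  shows
   "(\<forall>p::nat. prime p \<and> odd p \<and> int p dvd x \<longrightarrow>
        multiplicity (int p) (z ^ (p - 1) - y ^ (p - 1)) \<ge> n - 1)
  \<and> (\<forall>p::nat. prime p \<and> odd p \<and> int p dvd y \<longrightarrow>
        multiplicity (int p) (z ^ (p - 1) - x ^ (p - 1)) \<ge> n - 1)
  \<and> (\<forall>p::nat. prime p \<and> odd p \<and> int p dvd z \<longrightarrow>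
        x ^ (p - 1) - y ^ (p - 1) = 0 \<or>
        multiplicity (int p) (x ^ (p - 1) - y ^ (p - 1)) \<ge> n - 1)
  \<and> (\<not> int n dvd x * y * z \<longrightarrow>
      (\<forall>p::nat. prime p \<and> odd p \<and> int p dvd x \<longrightarrow>
          multiplicity (int p) (z ^ (p - 1) - y ^ (p - 1)) \<ge> n)
    \<and> (\<forall>p::nat. prime p \<and> odd p \<and> int p dvd y \<longrightarrow>
          multiplicity (int p) (z ^ (p - 1) - x ^ (p - 1)) \<ge> n)
    \<and> (\<forall>p::nat. prime p \<and> odd p \<and> int p dvd z \<longrightarrow>
          x ^ (p - 1) - y ^ (p - 1) = 0 \<or>
          multiplicity (int p) (x ^ (p - 1) - y ^ (p - 1)) \<ge> n))
  \<and> (2 dvd z \<longrightarrow> multiplicity 2 (x + y) \<ge> n)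
  \<and> (2 dvd x \<longrightarrow> multiplicity 2 (z - y) \<ge> n)
  \<and> (2 dvd y \<longrightarrow> multiplicity 2 (z - x) \<ge> n)
  \<and> (\<forall>p::nat. prime p \<and> int p dvd x \<and> int p dvd (z - y) \<longrightarrow>
        multiplicity (int p) (z - y) \<ge> n - 1)
  \<and> (\<forall>p::nat. prime p \<and> int p dvd y \<and> int p dvd (z - x) \<longrightarrow>
        multiplicity (int p) (z - x) \<ge> n - 1)
  \<and> (\<forall>p::nat. prime p \<and> int p dvd z \<and> int p dvd (x + y) \<longrightarrow>
        multiplicity (int p) (x + y) \<ge> n - 1)"
proof -
  interpret fermat_triple n x y z
    using assms by unfold_locales
  show ?thesis
    by (intro conjI allI impI; (elim conjE)?;
        rule prime_dvd_x_multiplicity_ge prime_dvd_y_multiplicity_ge prime_dvd_z_multiplicity_ge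
          multiplicity_2_ge common_prime_multiplicity_ge; assumption)
qed

end
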